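(* Let $n>4$ and let $L$ and ${}^*L=e^{\sigma(x)}L+\beta$ be as in the context. Then $(M,L)$ is $S_4$-like if and only if $(M,{}^*L)$ is $S_4$-like.
   Context: $M$ is a smooth manifold of dimension $n$ with local coordinates $(x^i)$ and induced fiber coordinates $(y^i)$ on $TM$. $L(x,y)$ is a Finsler metric: positive and smooth for $y\neq0$, positively homogeneous of degree 1 in $y$, with positive definite fundamental tensor $g_{ij}=\frac12\frac{\partial^2L^2}{\partial y^i\partial y^j}$ and inverse $g^{ij}$. $\sigma(x)$ is a smooth function on $M$ and $\beta(x,y)=b_i(x)y^i$ is a 1-form; the conformal $\beta$-change is ${}^*L=e^{\sigma(x)}L+\beta$, assumed to be again a Finsler metric. Notation: $l_i=\partial L/\partial y^i$, $h_{ij}=g_{ij}-l_il_j$, $c_{ijk}=\frac12\partial g_{ij}/\partial y^k$, $c_h{}^r{}_k=g^{rs}c_{hsk}$, $S_{hijk}=c_{ijr}c_h{}^r{}_k-c_{ikr}c_h{}^r{}_j$ (third curvature tensor), $S_{ik}=g^{hj}S_{hijk}$, $S=g^{ik}S_{ik}$, and $M_{ij}=\frac{1}{n-3}\big[S_{ij}-\frac{S\,h_{ij}}{2(n-2)}\big]$. Quantities built from ${}^*L$ by the same formulas (using ${}^*g_{ij}$ and its inverse ${}^*g^{ij}$) are denoted with a left asterisk. A Finsler space of dimension $n>4$ is $S_4$-like if $S_{hijk}=h_{jh}M_{ik}+h_{ik}M_{jh}-h_{hk}M_{ij}-h_{ij}M_{hk}$. *)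

theory Defs
  imports "HOL-Analysis.Analysis"
begin

definition pdir :: "'a::euclidean_space \<Rightarrow> ('a \<Rightarrow> real) \<Rightarrow> 'a \<Rightarrow> real" where
  "pdir v f p = deriv (\<lambda>t. f (p + t *\<^sub>R v)) 0"

fun iter_pdir :: "'a::euclidean_space list \<Rightarrow> ('a \<Rightarrow> real) \<Rightarrow> 'a \<Rightarrow> real" where
  "iter_pdir [] f = f"
| "iter_pdir (v # vs) f = pdir v (iter_pdir vs f)"

definition smooth_on :: "'a::euclidean_space set \<Rightarrow> ('a \<Rightarrow> real) \<Rightarrow> bool" where
  "smooth_on S f \<longleftrightarrow>
     (\<forall>vs. set vs \<subseteq> Basis \<longrightarrow> (\<forall>p\<in>S. iter_pdir vs f differentiable (at p)))"

definition pd :: "'n::finite \<Rightarrow> (real^'n \<Rightarrow> real) \<Rightarrow> real^'n \<Rightarrow> real" where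
  "pd i f y = pdir (axis i 1) f y"

text \<open>All quantities below are in local coordinates (x^i) on a chart domain
  U \<subseteq> R^n, with fibre coordinates y; L x y is the Finsler function.\<close>

definition gt :: "(real^'n \<Rightarrow> real^'n \<Rightarrow> real) \<Rightarrow> real^'n \<Rightarrow> real^'n \<Rightarrow> 'n::finite \<Rightarrow> 'n \<Rightarrow> real" where
  "gt L x y i j = 1/2 * pd i (pd j (\<lambda>z. (L x z)^2)) y"

definition gmat :: "(real^'n \<Rightarrow> real^'n \<Rightarrow> real) \<Rightarrow> real^'n \<Rightarrow> real^'n \<Rightarrow> real^'n^'n::finite" where
  "gmat L x y = (\<chi> i j. gt L x y i j)"

definition ginv :: "(real^'n \<Rightarrow> real^'n \<Rightarrow> real) \<Rightarrow> real^'n \<Rightarrow> real^'n \<Rightarrow> 'n::finite \<Rightarrow> 'n \<Rightarrow> real" where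
  "ginv L x y i j = matrix_inv (gmat L x y) $ i $ j"

definition lt :: "(real^'n \<Rightarrow> real^'n \<Rightarrow> real) \<Rightarrow> real^'n \<Rightarrow> real^'n \<Rightarrow> 'n::finite \<Rightarrow> real" where
  "lt L x y i = pd i (L x) y"

definition ht :: "(real^'n \<Rightarrow> real^'n \<Rightarrow> real) \<Rightarrow> real^'n \<Rightarrow> real^'n \<Rightarrow> 'n::finite \<Rightarrow> 'n \<Rightarrow> real" where
  "ht L x y i j = gt L x y i j - lt L x y i * lt L x y j"

definition ct :: "(real^'n \<Rightarrow> real^'n \<Rightarrow> real) \<Rightarrow> real^'n \<Rightarrow> real^'n \<Rightarrow> 'n::finite \<Rightarrow> 'n \<Rightarrow> 'n \<Rightarrow> real" where
  "ct L x y i j k = 1/2 * pd k (\<lambda>z. gt L x z i j) y"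

definition cmix :: "(real^'n \<Rightarrow> real^'n \<Rightarrow> real) \<Rightarrow> real^'n \<Rightarrow> real^'n \<Rightarrow> 'n::finite \<Rightarrow> 'n \<Rightarrow> 'n \<Rightarrow> real" where
  "cmix L x y h r k = (\<Sum>s\<in>UNIV. ginv L x y r s * ct L x y h s k)"

definition S3 :: "(real^'n \<Rightarrow> real^'n \<Rightarrow> real) \<Rightarrow> real^'n \<Rightarrow> real^'n \<Rightarrow> 'n::finite \<Rightarrow> 'n \<Rightarrow> 'n \<Rightarrow> 'n \<Rightarrow> real" where
  "S3 L x y h i j k =
     (\<Sum>r\<in>UNIV. ct L x y i j r * cmix L x y h r k - ct L x y i k r * cmix L x y h r j)"

definition Sric :: "(real^'n \<Rightarrow> real^'n \<Rightarrow> real) \<Rightarrow> real^'n \<Rightarrow> real^'n \<Rightarrow> 'n::finite \<Rightarrow> 'n \<Rightarrow> real" where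
  "Sric L x y i k = (\<Sum>h\<in>UNIV. \<Sum>j\<in>UNIV. ginv L x y h j * S3 L x y h i j k)"

definition Sscal :: "(real^'n \<Rightarrow> real^'n \<Rightarrow> real) \<Rightarrow> real^'n \<Rightarrow> real^'n::finite \<Rightarrow> real" where
  "Sscal L x y = (\<Sum>i\<in>UNIV. \<Sum>k\<in>UNIV. ginv L x y i k * Sric L x y i k)"

definition Mt :: "(real^'n \<Rightarrow> real^'n \<Rightarrow> real) \<Rightarrow> real^'n \<Rightarrow> real^'n \<Rightarrow> 'n::finite \<Rightarrow> 'n \<Rightarrow> real" where
  "Mt L x y i j = 1 / (real CARD('n) - 3) *
     (Sric L x y i j - Sscal L x y * ht L x y i j / (2 * (real CARD('n) - 2)))"

definition finsler_metric :: "(real^'n::finite) set \<Rightarrow> (real^'n \<Rightarrow> real^'n \<Rightarrow> real) \<Rightarrow> bool" where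
  "finsler_metric U L \<longleftrightarrow>
     smooth_on (U \<times> (UNIV - {0})) (\<lambda>(x, y). L x y) \<and>
     (\<forall>x\<in>U. \<forall>y. y \<noteq> 0 \<longrightarrow> L x y > 0) \<and>
     (\<forall>x\<in>U. \<forall>y. \<forall>t::real. t > 0 \<longrightarrow> L x (t *\<^sub>R y) = t * L x y) \<and>
     (\<forall>x\<in>U. \<forall>y. y \<noteq> 0 \<longrightarrow>
        (\<forall>v::real^'n. v \<noteq> 0 \<longrightarrow> (\<Sum>i\<in>UNIV. \<Sum>j\<in>UNIV. gt L x y i j * v$i * v$j) > 0))"

definition S4_like :: "(real^'n::finite) set \<Rightarrow> (real^'n \<Rightarrow> real^'n \<Rightarrow> real) \<Rightarrow> bool" where
  "S4_like U L \<longleftrightarrow>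
     (\<forall>x\<in>U. \<forall>y. y \<noteq> 0 \<longrightarrow> (\<forall>h i j k.
        S3 L x y h i j k =
          ht L x y j h * Mt L x y i k + ht L x y i k * Mt L x y j h
          - ht L x y h k * Mt L x y i j - ht L x y i j * Mt L x y h k))"

end

theory Submission
  imports Defs
begin

text \<open>Everything is pointwise in \<open>x \<in> U\<close>, \<open>y \<noteq> 0\<close>, where the \<open>S4\<close>-condition depends on \<open>L\<close> only
  through its value, its first three \<open>y\<close>-derivatives \<open>l\<close>, \<open>H\<close>, \<open>T\<close> and the inverse of \<open>g\<close>.
  Under \<open>L' = c L + \<beta>\<close> with \<open>c = exp (\<sigma> x)\<close> these become \<open>l' = c l + b\<close>, \<open>H' = c H\<close>,
  \<open>T' = c T\<close>. With \<open>\<tau> = L'/L\<close> and \<open>m_i = b_i - (\<beta>/L) l_i\<close>, which annihilates \<open>y\<close>, one finds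
  \<open>h' = c \<tau> h\<close>, \<open>c'_ijk = c \<tau> c_ijk + (c/2L) (h_ij m_k + h_jk m_i + h_ki m_j)\<close>, and on covectors
  annihilating \<open>y\<close> the new inverse metric is the old one divided by \<open>c \<tau>\<close>. Expanding the third
  curvature tensor gives \<open>S' = c \<tau> (S + h \<and> P)\<close>, with \<open>\<and>\<close> the product \<open>kn_product\<close> and an
  explicit symmetric \<open>P = M_shift\<close> annihilating \<open>y\<close>,
  so \<open>S = h \<and> M\<close> implies \<open>S' = h' \<and> (M + P)\<close>, and a double trace (using \<open>n > 3\<close>) identifies
  \<open>M + P\<close> with \<open>M'\<close>. The inverse change has the same form, which gives the converse.\<close>

section \<open>Partial derivatives\<close>

lemma has_real_derivative_line:
  fixes f :: "'a::real_normed_vector \<Rightarrow> real"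
  assumes "(f has_derivative F') (at (q + t *\<^sub>R v))"
  shows "((\<lambda>t. f (q + t *\<^sub>R v)) has_real_derivative F' v) (at t)"
proof -
  have lin: "linear F'" using assms has_derivative_linear by blast
  have "((\<lambda>t::real. q + t *\<^sub>R v) has_derivative (\<lambda>h. h *\<^sub>R v)) (at t)"
    by (auto intro!: derivative_eq_intros)
  then have "((f \<circ> (\<lambda>t. q + t *\<^sub>R v)) has_derivative (F' \<circ> (\<lambda>h. h *\<^sub>R v))) (at t)"
    by (rule diff_chain_at) (use assms in simp)
  moreover have "F' \<circ> (\<lambda>h. h *\<^sub>R v) = (*) (F' v)"
    by (rule ext) (simp add: linear_cmul[OF lin])
  ultimately show ?thesis unfolding has_field_derivative_def by (simp add: o_def)
qed

lemma pd_has_derivative: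
  fixes f :: "real^'n::finite \<Rightarrow> real"
  assumes "(f has_derivative f') (at y)"
  shows "pd i f y = f' (axis i 1)"
  unfolding pd_def pdir_def
  by (rule DERIV_imp_deriv, rule has_real_derivative_line) (use assms in simp)

lemma pd_cong_open:
  fixes f g :: "real^'n::finite \<Rightarrow> real"
  assumes "open S" "y \<in> S" "\<And>z. z \<in> S \<Longrightarrow> f z = g z"
  shows "pd i f y = pd i g y"
proof -
  let ?p = "\<lambda>t::real. y + t *\<^sub>R axis i 1"
  have "open (?p -` S)" by (rule continuous_open_vimage[OF assms(1)]) (intro continuous_intros)
  moreover have "0 \<in> ?p -` S" using assms(2) by simp
  ultimately have "eventually (\<lambda>t. ?p t \<in> S) (nhds 0)"
    unfolding eventually_nhds by blast
  then have "eventually (\<lambda>t. f (?p t) = g (?p t)) (nhds 0)"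
    by (rule eventually_mono) (simp add: assms(3))
  then show ?thesis unfolding pd_def pdir_def by (rule deriv_cong_ev) simp
qed

lemma pd_add:
  fixes f g :: "real^'n::finite \<Rightarrow> real"
  assumes "f differentiable (at y)" "g differentiable (at y)"
  shows "pd i (\<lambda>z. f z + g z) y = pd i f y + pd i g y"
proof -
  obtain F' where F: "(f has_derivative F') (at y)" using assms(1) differentiable_def by blast
  obtain G' where G: "(g has_derivative G') (at y)" using assms(2) differentiable_def by blast
  show ?thesis
    using pd_has_derivative[OF has_derivative_add[OF F G]] pd_has_derivative[OF F] pd_has_derivative[OF G]
    by simp
qed

lemma pd_mult:
  fixes f g :: "real^'n::finite \<Rightarrow> real"
  assumes "f differentiable (at y)" "g differentiable (at y)"
  shows "pd i (\<lambda>z. f z * g z) y = pd i f y * g y + f y * pd i g y"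
proof -
  obtain F' where F: "(f has_derivative F') (at y)" using assms(1) differentiable_def by blast
  obtain G' where G: "(g has_derivative G') (at y)" using assms(2) differentiable_def by blast
  show ?thesis
    using pd_has_derivative[OF has_derivative_mult[OF F G]] pd_has_derivative[OF F] pd_has_derivative[OF G]
    by simp
qed

lemma pd_const: "pd i (\<lambda>z::real^'n::finite. c) y = 0"
  using pd_has_derivative[of "\<lambda>z::real^'n. c" "\<lambda>_. 0"] by simp

lemma pd_cmult:
  fixes f :: "real^'n::finite \<Rightarrow> real"
  assumes "f differentiable (at y)"
  shows "pd i (\<lambda>z. c * f z) y = c * pd i f y"
  using pd_mult[of "\<lambda>_. c" y f] assms by (simp add: pd_const)

lemma pd_linear: "pd i (\<lambda>z::real^'n::finite. \<Sum>j\<in>UNIV. b j * z$j) y = b i"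
proof -
  have "((\<lambda>z::real^'n. \<Sum>j\<in>UNIV. b j * z$j) has_derivative (\<lambda>h. \<Sum>j\<in>UNIV. b j * h$j)) (at y)"
    by (auto intro!: derivative_eq_intros bounded_linear_imp_has_derivative[OF bounded_linear_vec_nth])
  then have "pd i (\<lambda>z::real^'n. \<Sum>j\<in>UNIV. b j * z$j) y = (\<Sum>j\<in>UNIV. b j * axis i 1 $ j)"
    by (rule pd_has_derivative)
  also have "\<dots> = b i" by (simp add: axis_def if_distrib cong: if_cong)
  finally show ?thesis .
qed

lemma has_real_derivative_pd:
  fixes f :: "real^'n::finite \<Rightarrow> real"
  assumes "f differentiable (at (q + t *\<^sub>R axis i 1))"
  shows "((\<lambda>t. f (q + t *\<^sub>R axis i 1)) has_real_derivative pd i f (q + t *\<^sub>R axis i 1)) (at t)"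
proof -
  obtain F' where F: "(f has_derivative F') (at (q + t *\<^sub>R axis i 1))"
    using assms differentiable_def by blast
  show ?thesis using has_real_derivative_line[OF F] pd_has_derivative[OF F] by simp
qed

lemma pd_scaleR_arg:
  fixes f :: "real^'n::finite \<Rightarrow> real"
  assumes "f differentiable (at (t *\<^sub>R z))"
  shows "pd i (\<lambda>w. f (t *\<^sub>R w)) z = t * pd i f (t *\<^sub>R z)"
proof -
  obtain F' where F: "(f has_derivative F') (at (t *\<^sub>R z))" using assms differentiable_def by blast
  have lin: "linear F'" using F has_derivative_linear by blast
  have scale: "((\<lambda>w::real^'n. t *\<^sub>R w) has_derivative (\<lambda>h. t *\<^sub>R h)) (at z)"
    by (auto intro!: derivative_eq_intros)
  have "((f \<circ> (\<lambda>w. t *\<^sub>R w)) has_derivative (F' \<circ> (\<lambda>h. t *\<^sub>R h))) (at z)"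
    by (rule diff_chain_at[OF scale]) (use F in simp)
  then have "pd i (\<lambda>w. f (t *\<^sub>R w)) z = F' (t *\<^sub>R axis i 1)"
    using pd_has_derivative by (simp add: o_def)
  also have "\<dots> = t * F' (axis i 1)" by (simp add: linear_cmul[OF lin])
  finally show ?thesis using pd_has_derivative[OF F] by simp
qed

lemma euler_identity:
  fixes f :: "real^'n::finite \<Rightarrow> real"
  assumes df: "f differentiable (at y)"
    and radial: "\<And>t. t > 0 \<Longrightarrow> f (t *\<^sub>R y) = k t"
    and dk: "(k has_real_derivative d) (at 1)"
  shows "(\<Sum>j\<in>UNIV. pd j f y * y$j) = d"
proof -
  obtain F' where F: "(f has_derivative F') (at y)" using df differentiable_def by blast
  have lin: "linear F'" using F has_derivative_linear by blast
  have "((\<lambda>t. f (0 + t *\<^sub>R y)) has_real_derivative F' y) (at 1)"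
    by (rule has_real_derivative_line) (use F in simp)
  then have "(k has_field_derivative F' y) (at 1)"
    by (rule has_field_derivative_transform_within_open[of _ _ _ "{0<..}"]) (auto simp: radial)
  then have "F' y = d" using dk DERIV_unique by blast
  moreover have "F' y = (\<Sum>j\<in>UNIV. y$j * F' (axis j 1))"
  proof -
    have "y = (\<Sum>j\<in>UNIV. y$j *\<^sub>R axis j 1)"
      using basis_expansion[of y] by (simp add: scalar_mult_eq_scaleR)
    then have "F' y = (\<Sum>j\<in>UNIV. F' (y$j *\<^sub>R axis j 1))"
      by (metis linear_sum[OF lin])
    then show ?thesis by (simp add: linear_cmul[OF lin])
  qed
  ultimately show ?thesis using pd_has_derivative[OF F] by (simp add: mult.commute)
qed

lemma second_difference_mean_value:
  fixes f :: "real^'n::finite \<Rightarrow> real" and i j :: 'n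
  defines "u \<equiv> axis i 1 :: real^'n" and "v \<equiv> axis j 1 :: real^'n"
  assumes s: "0 < s"
    and square: "\<And>a b. 0 \<le> a \<Longrightarrow> a \<le> s \<Longrightarrow> 0 \<le> b \<Longrightarrow> b \<le> s \<Longrightarrow> p + a *\<^sub>R u + b *\<^sub>R v \<in> S"
    and df: "\<And>z. z \<in> S \<Longrightarrow> f differentiable (at z)"
    and dfi: "\<And>z. z \<in> S \<Longrightarrow> pd i f differentiable (at z)"
  obtains \<xi> \<eta> where "0 < \<xi>" "\<xi> < s" "0 < \<eta>" "\<eta> < s"
    "f (p + s *\<^sub>R v + s *\<^sub>R u) - f (p + s *\<^sub>R u) - f (p + s *\<^sub>R v) + f p
       = s^2 * pd j (pd i f) (p + \<xi> *\<^sub>R u + \<eta> *\<^sub>R v)"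
proof -
  define \<phi> where "\<phi> t = f ((p + s *\<^sub>R v) + t *\<^sub>R u) - f (p + t *\<^sub>R u)" for t
  have "DERIV \<phi> t :> pd i f ((p + s *\<^sub>R v) + t *\<^sub>R u) - pd i f (p + t *\<^sub>R u)"
    if "0 \<le> t" "t \<le> s" for t
  proof -
    have "(p + s *\<^sub>R v) + t *\<^sub>R u \<in> S" "p + t *\<^sub>R u \<in> S"
      using square[of t s] square[of t 0] that s by (simp_all add: add_ac)
    then show ?thesis unfolding \<phi>_def u_def by (intro DERIV_diff has_real_derivative_pd df)
  qed
  then obtain \<xi> where \<xi>: "0 < \<xi>" "\<xi> < s"
    "\<phi> s - \<phi> 0 = s * (pd i f ((p + s *\<^sub>R v) + \<xi> *\<^sub>R u) - pd i f (p + \<xi> *\<^sub>R u))"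
    using MVT2[of 0 s \<phi> "\<lambda>t. pd i f ((p + s *\<^sub>R v) + t *\<^sub>R u) - pd i f (p + t *\<^sub>R u)"] s by auto
  define \<psi> where "\<psi> r = pd i f ((p + \<xi> *\<^sub>R u) + r *\<^sub>R v)" for r
  have "DERIV \<psi> r :> pd j (pd i f) ((p + \<xi> *\<^sub>R u) + r *\<^sub>R v)" if "0 \<le> r" "r \<le> s" for r
    unfolding \<psi>_def v_def using square[of \<xi> r] that \<xi> by (intro has_real_derivative_pd dfi) (simp add: v_def)
  then obtain \<eta> where \<eta>: "0 < \<eta>" "\<eta> < s"
    "\<psi> s - \<psi> 0 = s * pd j (pd i f) ((p + \<xi> *\<^sub>R u) + \<eta> *\<^sub>R v)"
    using MVT2[of 0 s \<psi> "\<lambda>r. pd j (pd i f) ((p + \<xi> *\<^sub>R u) + r *\<^sub>R v)"] s by auto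
  have "f (p + s *\<^sub>R v + s *\<^sub>R u) - f (p + s *\<^sub>R u) - f (p + s *\<^sub>R v) + f p = \<phi> s - \<phi> 0"
    unfolding \<phi>_def by simp
  also have "\<dots> = s * (\<psi> s - \<psi> 0)" using \<xi>(3) unfolding \<psi>_def by (simp add: add_ac)
  also have "\<dots> = s^2 * pd j (pd i f) (p + \<xi> *\<^sub>R u + \<eta> *\<^sub>R v)"
    using \<eta>(3) by (simp add: power2_eq_square)
  finally show ?thesis using that \<xi>(1,2) \<eta>(1,2) by blast
qed

lemma second_difference_quotient_approx:
  fixes f :: "real^'n::finite \<Rightarrow> real" and i j :: 'n
  defines "u \<equiv> axis i 1 :: real^'n" and "v \<equiv> axis j 1 :: real^'n"
  assumes S: "open S" "p \<in> S"
    and df: "\<And>z. z \<in> S \<Longrightarrow> f differentiable (at z)"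
    and dfi: "\<And>z. z \<in> S \<Longrightarrow> pd i f differentiable (at z)"
    and cont: "isCont (pd j (pd i f)) p"
    and e: "e > 0"
  obtains d where "d > 0" "\<And>s. 0 < s \<Longrightarrow> s < d \<Longrightarrow>
    \<bar>(f (p + s *\<^sub>R v + s *\<^sub>R u) - f (p + s *\<^sub>R u) - f (p + s *\<^sub>R v) + f p) / s^2
       - pd j (pd i f) p\<bar> \<le> e"
proof -
  obtain d1 where d1: "d1 > 0" "\<And>z. dist z p < d1 \<Longrightarrow> \<bar>pd j (pd i f) z - pd j (pd i f) p\<bar> < e"
    using cont e unfolding continuous_at_eps_delta dist_real_def by blast
  obtain d2 where d2: "d2 > 0" "ball p d2 \<subseteq> S" using S open_contains_ball by blast
  have near: "dist (p + a *\<^sub>R u + b *\<^sub>R v) p < min d1 d2"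
    if "0 \<le> a" "0 \<le> b" "a + b < min d1 d2" for a b
  proof -
    have "norm (a *\<^sub>R u + b *\<^sub>R v) \<le> norm (a *\<^sub>R u) + norm (b *\<^sub>R v)" by (rule norm_triangle_ineq)
    also have "\<dots> = a + b" using that by (simp add: u_def v_def)
    finally show ?thesis using that by (simp add: dist_norm add.assoc)
  qed
  show ?thesis
  proof (rule that[of "min d1 d2 / 2"])
    fix s assume s: "0 < s" "s < min d1 d2 / 2"
    have "p + a *\<^sub>R u + b *\<^sub>R v \<in> S" if "0 \<le> a" "a \<le> s" "0 \<le> b" "b \<le> s" for a b
      using near[of a b] that s d2 by (auto simp: dist_commute)
    then obtain \<xi> \<eta> where \<xi>\<eta>: "0 < \<xi>" "\<xi> < s" "0 < \<eta>" "\<eta> < s"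
      and eq: "f (p + s *\<^sub>R v + s *\<^sub>R u) - f (p + s *\<^sub>R u) - f (p + s *\<^sub>R v) + f p
       = s^2 * pd j (pd i f) (p + \<xi> *\<^sub>R u + \<eta> *\<^sub>R v)"
      using second_difference_mean_value[where p=p and S=S and f=f and i=i and j=j, OF s(1) _ df dfi]
      unfolding u_def v_def by metis
    have "\<bar>pd j (pd i f) (p + \<xi> *\<^sub>R u + \<eta> *\<^sub>R v) - pd j (pd i f) p\<bar> < e"
      using d1(2) near[of \<xi> \<eta>] \<xi>\<eta> s by simp
    then show "\<bar>(f (p + s *\<^sub>R v + s *\<^sub>R u) - f (p + s *\<^sub>R u) - f (p + s *\<^sub>R v) + f p) / s^2
       - pd j (pd i f) p\<bar> \<le> e"
      using eq s by simp
  qed (use d1 d2 in simp)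
qed

text \<open>Schwarz's theorem: the symmetric second difference quotient of \<open>f\<close> at \<open>p\<close> tends to
  both mixed partial derivatives.\<close>

lemma pd_commute:
  fixes f :: "real^'n::finite \<Rightarrow> real"
  assumes S: "open S" "p \<in> S"
    and df: "\<And>z. z \<in> S \<Longrightarrow> f differentiable (at z)"
    and dfi: "\<And>z. z \<in> S \<Longrightarrow> pd i f differentiable (at z)"
    and dfj: "\<And>z. z \<in> S \<Longrightarrow> pd j f differentiable (at z)"
    and ci: "isCont (pd j (pd i f)) p"
    and cj: "isCont (pd i (pd j f)) p"
  shows "pd j (pd i f) p = pd i (pd j f) p"
proof (rule ccontr)
  let ?A = "pd j (pd i f) p" and ?B = "pd i (pd j f) p"
  let ?u = "axis i 1 :: real^'n" and ?v = "axis j 1 :: real^'n"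
  let ?Q = "\<lambda>s. (f (p + s *\<^sub>R ?v + s *\<^sub>R ?u) - f (p + s *\<^sub>R ?u) - f (p + s *\<^sub>R ?v) + f p) / s^2"
  assume "?A \<noteq> ?B"
  then have e: "\<bar>?A - ?B\<bar> / 3 > 0" by simp
  obtain d where d: "d > 0" "\<And>s. 0 < s \<Longrightarrow> s < d \<Longrightarrow> \<bar>?Q s - ?A\<bar> \<le> \<bar>?A - ?B\<bar> / 3"
    using second_difference_quotient_approx[OF S df dfi ci e] by blast
  have swap: "(f (p + s *\<^sub>R ?u + s *\<^sub>R ?v) - f (p + s *\<^sub>R ?v) - f (p + s *\<^sub>R ?u) + f p) / s^2 = ?Q s"
    for s by (simp add: algebra_simps)
  obtain d' where d': "d' > 0" "\<And>s. 0 < s \<Longrightarrow> s < d' \<Longrightarrow> \<bar>?Q s - ?B\<bar> \<le> \<bar>?A - ?B\<bar> / 3"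
    using second_difference_quotient_approx[OF S df dfj cj e] unfolding swap by blast
  define s where "s = min d d' / 2"
  have "0 < s" "s < d" "s < d'" using d d' by (auto simp: s_def)
  then have "\<bar>?Q s - ?A\<bar> \<le> \<bar>?A - ?B\<bar> / 3" "\<bar>?Q s - ?B\<bar> \<le> \<bar>?A - ?B\<bar> / 3"
    using d(2) d'(2) by blast+
  moreover have "\<And>q a b :: real. \<bar>q - a\<bar> \<le> \<bar>a - b\<bar> / 3 \<Longrightarrow> \<bar>q - b\<bar> \<le> \<bar>a - b\<bar> / 3 \<Longrightarrow> \<bar>a - b\<bar> / 3 > 0 \<Longrightarrow> False"
    by (simp add: abs_if split: if_splits)
  ultimately show False using e by blast
qed

lemma iter_pdir_snoc: "iter_pdir (vs @ [v]) f = iter_pdir vs (pdir v f)"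
  by (induction vs) simp_all

lemma smooth_on_pd:
  fixes f :: "real^'n::finite \<Rightarrow> real"
  assumes "smooth_on S f"
  shows "smooth_on S (pd i f)"
  unfolding smooth_on_def
proof (intro allI impI ballI)
  fix vs :: "(real^'n) list" and p assume "set vs \<subseteq> Basis" "p \<in> S"
  moreover have "axis i (1::real) \<in> Basis" by simp
  ultimately have "iter_pdir (vs @ [axis i 1]) f differentiable (at p)"
    using assms unfolding smooth_on_def by simp
  moreover have "pd i f = pdir (axis i 1) f" by (rule ext) (simp add: pd_def)
  ultimately show "iter_pdir vs (pd i f) differentiable (at p)" by (simp add: iter_pdir_snoc)
qed

lemma smooth_on_differentiable: "smooth_on S f \<Longrightarrow> p \<in> S \<Longrightarrow> f differentiable (at p)"
  unfolding smooth_on_def by (metis empty_subsetI empty_set iter_pdir.simps(1))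

lemma smooth_on_derivs_differentiable:
  fixes f :: "real^'n::finite \<Rightarrow> real"
  assumes "smooth_on S f" "p \<in> S"
  shows "f differentiable (at p)" "pd i f differentiable (at p)"
    "pd i (pd j f) differentiable (at p)" "pd i (pd j (pd k f)) differentiable (at p)"
  by (intro smooth_on_differentiable[OF _ assms(2)] smooth_on_pd assms(1))+

lemma open_punctured: "open (UNIV - {0::'a::{t1_space,zero}})"
  by (simp add: open_Diff)

lemma pd_pd_commute:
  fixes f :: "real^'n::finite \<Rightarrow> real"
  assumes "smooth_on (UNIV - {0}) f" "y \<noteq> 0"
  shows "pd a (pd b f) y = pd b (pd a f) y"
  by (rule pd_commute[OF open_punctured])
    (use assms in \<open>auto intro: smooth_on_derivs_differentiable differentiable_imp_continuous_within\<close>)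

lemma pd_pd_pd_commute12:
  fixes f :: "real^'n::finite \<Rightarrow> real"
  assumes "smooth_on (UNIV - {0}) f" "y \<noteq> 0"
  shows "pd a (pd b (pd d f)) y = pd b (pd a (pd d f)) y"
  using pd_pd_commute[OF smooth_on_pd[OF assms(1)] assms(2)] .

lemma pd_pd_pd_commute23:
  fixes f :: "real^'n::finite \<Rightarrow> real"
  assumes "smooth_on (UNIV - {0}) f" "y \<noteq> 0"
  shows "pd a (pd b (pd d f)) y = pd a (pd d (pd b f)) y"
  by (rule pd_cong_open[OF open_punctured]) (use assms pd_pd_commute[OF assms(1)] in auto)

lemma pd_homogeneous_deg0:
  fixes f :: "real^'n::finite \<Rightarrow> real"
  assumes f: "smooth_on (UNIV - {0}) f" and hom: "\<And>w. f (t *\<^sub>R w) = t * f w" and t: "t > 0"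
  shows "pd i f (t *\<^sub>R w) = pd i f w"
proof (cases "w = 0")
  case False
  then have "t *\<^sub>R w \<noteq> 0" using t by simp
  then have "t * pd i f (t *\<^sub>R w) = pd i (\<lambda>w. f (t *\<^sub>R w)) w"
    by (intro pd_scaleR_arg[symmetric] smooth_on_differentiable[OF f]) simp
  also have "\<dots> = t * pd i f w"
    using pd_cmult[OF smooth_on_differentiable[OF f]] False by (simp add: hom)
  finally show ?thesis using t by simp
qed simp

lemma pd_homogeneous_deg_minus1:
  fixes f :: "real^'n::finite \<Rightarrow> real"
  assumes f: "smooth_on (UNIV - {0}) f" and hom: "\<And>w t. t > 0 \<Longrightarrow> f (t *\<^sub>R w) = t * f w"
    and t: "t > 0" and y: "y \<noteq> 0"
  shows "pd a (pd i f) (t *\<^sub>R y) = pd a (pd i f) y / t"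
proof -
  have "(\<lambda>w. pd i f (t *\<^sub>R w)) = pd i f"
    using pd_homogeneous_deg0[OF f hom[OF t] t] by (intro ext) blast
  moreover have "t * pd a (pd i f) (t *\<^sub>R y) = pd a (\<lambda>w. pd i f (t *\<^sub>R w)) y"
    using y t by (intro pd_scaleR_arg[symmetric] smooth_on_derivs_differentiable[OF f]) simp
  ultimately show ?thesis using t by (simp add: field_simps)
qed

lemma euler_identities:
  fixes f :: "real^'n::finite \<Rightarrow> real"
  assumes f: "smooth_on (UNIV - {0}) f" and hom: "\<And>w t. t > 0 \<Longrightarrow> f (t *\<^sub>R w) = t * f w"
    and y: "y \<noteq> 0"
  shows "(\<Sum>i\<in>UNIV. pd i f y * y$i) = f y"
    and "(\<Sum>j\<in>UNIV. pd j (pd i f) y * y$j) = 0"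
    and "(\<Sum>k\<in>UNIV. pd k (pd i (pd j f)) y * y$k) = - pd i (pd j f) y"
proof -
  have yS: "y \<in> UNIV - {0}" using y by simp
  show "(\<Sum>i\<in>UNIV. pd i f y * y$i) = f y"
    by (rule euler_identity[OF smooth_on_differentiable[OF f yS], where k="\<lambda>t. t * f y"])
      (auto simp: hom intro!: derivative_eq_intros)
  show "(\<Sum>j\<in>UNIV. pd j (pd i f) y * y$j) = 0"
    by (rule euler_identity[OF smooth_on_derivs_differentiable(2)[OF f yS], where k="\<lambda>t. pd i f y"])
      (auto simp: pd_homogeneous_deg0[OF f hom] intro!: derivative_eq_intros)
  show "(\<Sum>k\<in>UNIV. pd k (pd i (pd j f)) y * y$k) = - pd i (pd j f) y"
    by (rule euler_identity[OF smooth_on_derivs_differentiable(3)[OF f yS], where k="\<lambda>t. pd i (pd j f) y / t"])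
      (auto simp: pd_homogeneous_deg_minus1[OF f hom _ y] power2_eq_square intro!: derivative_eq_intros)
qed

section \<open>The Cartan tensor at a point\<close>

lemma sum_delta_mult_left [simp]: "(\<Sum>j\<in>UNIV. (if i = j then 1 else 0) * f j) = (f (i::'n::finite) :: real)"
  by (simp add: if_distrib[of "\<lambda>c. c * _"] cong: if_cong)

lemma sum_delta_mult_right [simp]: "(\<Sum>j\<in>UNIV. f j * (if j = i then 1 else 0)) = (f (i::'n::finite) :: real)"
  by (simp add: if_distrib[of "\<lambda>c. _ * c"] cong: if_cong)

lemma contract_assoc:
  "(\<Sum>m\<in>UNIV. (\<Sum>k\<in>UNIV. a k * b k m) * c m) = (\<Sum>k\<in>UNIV. a k * (\<Sum>m\<in>UNIV. b k m * (c m::real)))"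
proof -
  have "(\<Sum>m\<in>UNIV. (\<Sum>k\<in>UNIV. a k * b k m) * c m) = (\<Sum>m\<in>UNIV. \<Sum>k\<in>UNIV. a k * (b k m * c m))"
    by (simp only: sum_distrib_right mult.assoc)
  also have "\<dots> = (\<Sum>k\<in>UNIV. \<Sum>m\<in>UNIV. a k * (b k m * c m))" by (rule sum.swap)
  also have "\<dots> = (\<Sum>k\<in>UNIV. a k * (\<Sum>m\<in>UNIV. b k m * c m))"
    by (simp only: sum_distrib_left)
  finally show ?thesis .
qed

lemma contract_swap:
  "(\<Sum>k\<in>UNIV. (\<Sum>r\<in>UNIV. c k r * d r) * (z k::real)) = (\<Sum>r\<in>UNIV. (\<Sum>k\<in>UNIV. c k r * z k) * d r)"
proof -
  have "(\<Sum>k\<in>UNIV. (\<Sum>r\<in>UNIV. c k r * d r) * z k) = (\<Sum>k\<in>UNIV. \<Sum>r\<in>UNIV. c k r * z k * d r)"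
    by (simp add: sum_distrib_right sum_distrib_left mult_ac)
  also have "\<dots> = (\<Sum>r\<in>UNIV. \<Sum>k\<in>UNIV. c k r * z k * d r)" by (rule sum.swap)
  also have "\<dots> = (\<Sum>r\<in>UNIV. (\<Sum>k\<in>UNIV. c k r * z k) * d r)"
    by (simp add: sum_distrib_right)
  finally show ?thesis .
qed

text \<open>For \<open>g = (1/2) \<partial>\<^sup>2(L\<^sup>2)\<close> one has \<open>g_ij = l_i l_j + L L_ij\<close>, \<open>h_ij = L L_ij\<close> and
  \<open>c_ijk = (1/2) \<partial>_k g_ij\<close>; below these are written in terms of the value \<open>Lv\<close>, gradient \<open>l\<close>,
  Hessian \<open>H\<close> and third derivatives \<open>T\<close> of \<open>L\<close> at a point.\<close>

definition fund_form :: "('n::finite \<Rightarrow> real) \<Rightarrow> real \<Rightarrow> ('n \<Rightarrow> 'n \<Rightarrow> real) \<Rightarrow> 'n \<Rightarrow> 'n \<Rightarrow> real" where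
  "fund_form l Lv H i j = l i * l j + Lv * H i j"

definition angular_form :: "real \<Rightarrow> ('n::finite \<Rightarrow> 'n \<Rightarrow> real) \<Rightarrow> 'n \<Rightarrow> 'n \<Rightarrow> real" where
  "angular_form Lv H i j = Lv * H i j"

definition cartan_form ::
    "('n::finite \<Rightarrow> real) \<Rightarrow> real \<Rightarrow> ('n \<Rightarrow> 'n \<Rightarrow> real) \<Rightarrow> ('n \<Rightarrow> 'n \<Rightarrow> 'n \<Rightarrow> real) \<Rightarrow> 'n \<Rightarrow> 'n \<Rightarrow> 'n \<Rightarrow> real" where
  "cartan_form l Lv H T i j k = (H k i * l j + l i * H k j + l k * H i j + Lv * T k i j) / 2"

definition inv_form :: "('n::finite \<Rightarrow> 'n \<Rightarrow> real) \<Rightarrow> ('n \<Rightarrow> real) \<Rightarrow> ('n \<Rightarrow> real) \<Rightarrow> real" where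
  "inv_form G X Y = (\<Sum>r\<in>UNIV. X r * (\<Sum>s\<in>UNIV. G r s * Y s))"

definition S3_of :: "('n::finite \<Rightarrow> 'n \<Rightarrow> real) \<Rightarrow> ('n \<Rightarrow> 'n \<Rightarrow> 'n \<Rightarrow> real) \<Rightarrow> 'n \<Rightarrow> 'n \<Rightarrow> 'n \<Rightarrow> 'n \<Rightarrow> real" where
  "S3_of G C h i j k =
     (\<Sum>r\<in>UNIV. C i j r * (\<Sum>s\<in>UNIV. G r s * C h s k) - C i k r * (\<Sum>s\<in>UNIV. G r s * C h s j))"

definition Sric_of :: "('n::finite \<Rightarrow> 'n \<Rightarrow> real) \<Rightarrow> ('n \<Rightarrow> 'n \<Rightarrow> 'n \<Rightarrow> real) \<Rightarrow> 'n \<Rightarrow> 'n \<Rightarrow> real" where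
  "Sric_of G C i k = (\<Sum>h\<in>UNIV. \<Sum>j\<in>UNIV. G h j * S3_of G C h i j k)"

definition Sscal_of :: "('n::finite \<Rightarrow> 'n \<Rightarrow> real) \<Rightarrow> ('n \<Rightarrow> 'n \<Rightarrow> 'n \<Rightarrow> real) \<Rightarrow> real" where
  "Sscal_of G C = (\<Sum>i\<in>UNIV. \<Sum>k\<in>UNIV. G i k * Sric_of G C i k)"

definition Mt_of ::
    "('n::finite \<Rightarrow> 'n \<Rightarrow> real) \<Rightarrow> ('n \<Rightarrow> 'n \<Rightarrow> 'n \<Rightarrow> real) \<Rightarrow> ('n \<Rightarrow> 'n \<Rightarrow> real) \<Rightarrow> 'n \<Rightarrow> 'n \<Rightarrow> real" where
  "Mt_of G C A i j = 1 / (real CARD('n) - 3) *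
     (Sric_of G C i j - Sscal_of G C * A i j / (2 * (real CARD('n) - 2)))"

definition kn_product :: "('n \<Rightarrow> 'n \<Rightarrow> real) \<Rightarrow> ('n \<Rightarrow> 'n \<Rightarrow> real) \<Rightarrow> 'n \<Rightarrow> 'n \<Rightarrow> 'n \<Rightarrow> 'n \<Rightarrow> real" where
  "kn_product A N h i j k = A j h * N i k + A i k * N j h - A h k * N i j - A i j * N h k"

definition S4_like_of :: "('n::finite \<Rightarrow> 'n \<Rightarrow> real) \<Rightarrow> ('n \<Rightarrow> 'n \<Rightarrow> 'n \<Rightarrow> real) \<Rightarrow> ('n \<Rightarrow> 'n \<Rightarrow> real) \<Rightarrow> bool" where
  "S4_like_of G C A \<longleftrightarrow> (\<forall>h i j k. S3_of G C h i j k = kn_product A (Mt_of G C A) h i j k)"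

lemma inv_form_add_left: "inv_form G (\<lambda>r. X r + Y r) Z = inv_form G X Z + inv_form G Y Z"
  unfolding inv_form_def by (simp add: distrib_right sum.distrib)

lemma inv_form_cmult_left: "inv_form G (\<lambda>r. a * X r) Z = a * inv_form G X Z"
  unfolding inv_form_def by (simp add: sum_distrib_left mult.assoc)

lemma inv_form_add_right: "inv_form G Z (\<lambda>r. X r + Y r) = inv_form G Z X + inv_form G Z Y"
  unfolding inv_form_def by (simp add: distrib_left sum.distrib)

lemma inv_form_cmult_right: "inv_form G Z (\<lambda>r. a * X r) = a * inv_form G Z X"
  unfolding inv_form_def by (simp add: sum_distrib_left mult_ac)

lemma inv_form_contract_left:
  "(\<Sum>d\<in>UNIV. inv_form G (Z d) X * c d) = inv_form G (\<lambda>r. \<Sum>d\<in>UNIV. Z d r * c d) X"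
  unfolding inv_form_def by (rule contract_swap)

text \<open>The Euler identities encode homogeneity of degree one.\<close>

locale finsler_jet =
  fixes y :: "real^'n::finite" and Lv :: real and l :: "'n \<Rightarrow> real"
    and H :: "'n \<Rightarrow> 'n \<Rightarrow> real" and T :: "'n \<Rightarrow> 'n \<Rightarrow> 'n \<Rightarrow> real"
    and G :: "'n \<Rightarrow> 'n \<Rightarrow> real"
  assumes Lv_nonzero: "Lv \<noteq> 0"
    and H_sym: "\<And>i j. H i j = H j i"
    and T_sym12: "\<And>i j k. T i j k = T j i k" and T_sym23: "\<And>i j k. T i j k = T i k j"
    and euler_l: "(\<Sum>i\<in>UNIV. l i * y$i) = Lv"
    and euler_H: "\<And>i. (\<Sum>j\<in>UNIV. H i j * y$j) = 0"
    and euler_T: "\<And>i j. (\<Sum>k\<in>UNIV. T i j k * y$k) = - H i j"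
    and fund_inv: "\<And>i k. (\<Sum>j\<in>UNIV. fund_form l Lv H i j * G j k) = (if i = k then 1 else 0)"
    and inv_fund: "\<And>i k. (\<Sum>j\<in>UNIV. G i j * fund_form l Lv H j k) = (if i = k then 1 else 0)"
begin

abbreviation "fund \<equiv> fund_form l Lv H"
abbreviation "ang \<equiv> angular_form Lv H"
abbreviation "cart \<equiv> cartan_form l Lv H T"

lemma fund_sym: "fund i j = fund j i"
  unfolding fund_form_def using H_sym[of i j] by simp

lemma inv_fund_transposed: "(\<Sum>k\<in>UNIV. G k j * fund k m) = (if j = m then 1 else 0)"
proof -
  have "(\<Sum>k\<in>UNIV. G k j * fund k m) = (\<Sum>k\<in>UNIV. fund m k * G k j)"
    by (intro sum.cong refl) (metis fund_sym mult.commute)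
  then show ?thesis using fund_inv[of m j] by (simp add: eq_commute)
qed

lemma inv_sym: "G i j = G j i"
proof -
  have "G j i = (\<Sum>m\<in>UNIV. (if j = m then 1 else 0) * G m i)" by simp
  also have "\<dots> = (\<Sum>m\<in>UNIV. (\<Sum>k\<in>UNIV. G k j * fund k m) * G m i)"
    using inv_fund_transposed by simp
  also have "\<dots> = (\<Sum>k\<in>UNIV. G k j * (\<Sum>m\<in>UNIV. fund k m * G m i))"
    by (rule contract_assoc)
  also have "\<dots> = G i j" using fund_inv by (simp add: mult_ac)
  finally show ?thesis by simp
qed

lemma fund_y: "(\<Sum>j\<in>UNIV. fund i j * y$j) = Lv * l i"
proof -
  have "(\<Sum>j\<in>UNIV. fund i j * y$j) = (\<Sum>j\<in>UNIV. l i * (l j * y$j) + Lv * (H i j * y$j))"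
    unfolding fund_form_def by (simp add: algebra_simps)
  also have "\<dots> = l i * (\<Sum>j\<in>UNIV. l j * y$j) + Lv * (\<Sum>j\<in>UNIV. H i j * y$j)"
    by (simp add: sum.distrib sum_distrib_left)
  also have "\<dots> = Lv * l i" using euler_l euler_H by simp
  finally show ?thesis .
qed

lemma inv_l: "(\<Sum>j\<in>UNIV. G i j * l j) = y$i / Lv"
proof -
  have "y$i = (\<Sum>k\<in>UNIV. (\<Sum>j\<in>UNIV. G i j * fund j k) * y$k)" using inv_fund by simp
  also have "\<dots> = (\<Sum>j\<in>UNIV. G i j * (\<Sum>k\<in>UNIV. fund j k * y$k))"
    by (rule contract_assoc)
  also have "\<dots> = Lv * (\<Sum>j\<in>UNIV. G i j * l j)" using fund_y by (simp add: sum_distrib_left mult_ac)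
  finally show ?thesis using Lv_nonzero by (simp add: field_simps)
qed

lemma l_inv: "(\<Sum>j\<in>UNIV. l j * G j i) = y$i / Lv"
  using inv_l[of i] by (simp add: inv_sym mult.commute)

lemma ang_eq_fund: "ang i j = fund i j - l i * l j"
  unfolding angular_form_def fund_form_def by simp

lemma ang_sym: "ang i j = ang j i"
  using H_sym by (simp add: angular_form_def)

lemma ang_inv: "(\<Sum>j\<in>UNIV. ang i j * G j k) = (if i = k then 1 else 0) - l i * y$k / Lv"
proof -
  have "(\<Sum>j\<in>UNIV. ang i j * G j k) = (\<Sum>j\<in>UNIV. fund i j * G j k - l i * (l j * G j k))"
    unfolding ang_eq_fund by (simp add: algebra_simps)
  also have "\<dots> = (\<Sum>j\<in>UNIV. fund i j * G j k) - l i * (\<Sum>j\<in>UNIV. l j * G j k)"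
    by (simp add: sum_subtractf sum_distrib_left)
  also have "\<dots> = (if i = k then 1 else 0) - l i * y$k / Lv" using fund_inv l_inv by simp
  finally show ?thesis .
qed

lemma inv_ang: "(\<Sum>j\<in>UNIV. G i j * ang j k) = (if i = k then 1 else 0) - y$i * l k / Lv"
  using ang_inv[of k i] by (simp add: inv_sym ang_sym mult.commute eq_commute)

lemma ang_y: "(\<Sum>j\<in>UNIV. ang i j * y$j) = 0"
  using euler_H by (simp add: angular_form_def sum_distrib_left[symmetric] mult.assoc)

lemma cart_sym12: "cart i j k = cart j i k"
  unfolding cartan_form_def using H_sym[of k i] H_sym[of k j] H_sym[of i j] T_sym23[of k i j] by simp

lemma cart_sym23: "cart i j k = cart i k j"
proof -
  have "T k i j = T j i k" by (metis T_sym12 T_sym23)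
  then show ?thesis
    unfolding cartan_form_def using H_sym[of k i] H_sym[of j i] H_sym[of k j] H_sym[of i j]
    by (simp add: algebra_simps)
qed

lemma cart_y: "(\<Sum>r\<in>UNIV. cart i j r * y$r) = 0"
proof -
  have a: "(\<Sum>r\<in>UNIV. H r a * y$r) = 0" for a using euler_H[of a] by (simp add: H_sym[of _ a])
  have b: "(\<Sum>r\<in>UNIV. T r i j * y$r) = - H i j"
    using euler_T[of i j] by (metis (no_types, lifting) T_sym12 T_sym23 sum.cong)
  have "(\<Sum>r\<in>UNIV. cart i j r * y$r) = (\<Sum>r\<in>UNIV.
      ((H r i * y$r) * l j + l i * (H r j * y$r) + (l r * y$r) * H i j + Lv * (T r i j * y$r)) / 2)"
    by (rule sum.cong) (simp_all add: cartan_form_def field_simps)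
  also have "\<dots> = ((\<Sum>r\<in>UNIV. H r i * y$r) * l j + l i * (\<Sum>r\<in>UNIV. H r j * y$r)
      + (\<Sum>r\<in>UNIV. l r * y$r) * H i j + Lv * (\<Sum>r\<in>UNIV. T r i j * y$r)) / 2"
    by (simp only: sum_divide_distrib[symmetric] sum.distrib sum_distrib_left[symmetric] sum_distrib_right[symmetric])
  also have "\<dots> = 0" using a b euler_l by simp
  finally show ?thesis .
qed

lemma inv_form_ang_left: assumes "(\<Sum>r\<in>UNIV. X r * y$r) = 0"
  shows "inv_form G (ang i) X = X i"
proof -
  have "inv_form G (ang i) X = (\<Sum>s\<in>UNIV. (\<Sum>r\<in>UNIV. ang i r * G r s) * X s)"
    unfolding inv_form_def by (rule contract_assoc[symmetric])
  also have "\<dots> = (\<Sum>s\<in>UNIV. ((if i = s then 1 else 0) - l i * y$s / Lv) * X s)"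
    by (simp only: ang_inv)
  also have "\<dots> = (\<Sum>s\<in>UNIV. (if i = s then 1 else 0) * X s - l i / Lv * (X s * y$s))"
    by (rule sum.cong) (simp_all add: algebra_simps)
  also have "\<dots> = X i - l i / Lv * (\<Sum>s\<in>UNIV. X s * y$s)"
    by (simp add: sum_subtractf sum_distrib_left)
  finally show ?thesis using assms by simp
qed

lemma inv_form_sym: "inv_form G X Y = inv_form G Y X"
proof -
  have "inv_form G X Y = (\<Sum>s\<in>UNIV. (\<Sum>r\<in>UNIV. X r * G r s) * Y s)"
    unfolding inv_form_def by (rule contract_assoc[symmetric])
  also have "\<dots> = inv_form G Y X"
    unfolding inv_form_def by (intro sum.cong refl) (simp add: inv_sym sum_distrib_left mult_ac)
  finally show ?thesis .
qed

lemma inv_form_ang_right: assumes "(\<Sum>r\<in>UNIV. X r * y$r) = 0"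
  shows "inv_form G X (ang i) = X i"
  using inv_form_ang_left[OF assms] inv_form_sym by simp

lemma S3_of_inv_form: "S3_of G cart h i j k
   = inv_form G (cart i j) (cart h k) - inv_form G (cart i k) (cart h j)"
proof -
  have inner: "(\<Sum>s\<in>UNIV. G r s * cart a s b) = (\<Sum>s\<in>UNIV. G r s * cart a b s)" for r a b
    by (intro sum.cong refl) (metis cart_sym23)
  show ?thesis unfolding S3_of_def inv_form_def inner by (simp only: sum_subtractf)
qed

lemma inv_form_cart_y: "(\<Sum>d\<in>UNIV. inv_form G (cart a d) X * y$d) = 0"
proof -
  have "(\<lambda>r. \<Sum>d\<in>UNIV. cart a d r * y$d) = (\<lambda>r. 0)"
    using cart_y cart_sym23 by (intro ext) (metis (no_types, lifting) sum.cong)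
  then show ?thesis unfolding inv_form_contract_left by (simp add: inv_form_def)
qed

lemma S3_of_y: "(\<Sum>k\<in>UNIV. S3_of G cart h i j k * y$k) = 0"
proof -
  have "(\<Sum>k\<in>UNIV. S3_of G cart h i j k * y$k)
      = (\<Sum>k\<in>UNIV. inv_form G (cart h k) (cart i j) * y$k) - (\<Sum>k\<in>UNIV. inv_form G (cart i k) (cart h j) * y$k)"
    unfolding S3_of_inv_form by (simp add: inv_form_sym[of "cart i j"] left_diff_distrib sum_subtractf)
  then show ?thesis by (simp add: inv_form_cart_y)
qed

lemma trace_inv_ang: "(\<Sum>h\<in>UNIV. \<Sum>j\<in>UNIV. G h j * ang j h) = real CARD('n) - 1"
proof -
  have "(\<Sum>h\<in>UNIV. \<Sum>j\<in>UNIV. G h j * ang j h) = (\<Sum>h\<in>UNIV. 1 - y$h * l h / Lv)"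
    by (rule sum.cong) (simp_all add: inv_ang)
  also have "\<dots> = real CARD('n) - (\<Sum>h\<in>UNIV. l h * y$h) / Lv"
    by (simp add: sum_subtractf sum_divide_distrib[symmetric] mult.commute)
  finally show ?thesis using euler_l Lv_nonzero by simp
qed

lemma contract_inv_ang:
  assumes Ny: "(\<Sum>j\<in>UNIV. N j * y$j) = 0"
  shows "(\<Sum>h\<in>UNIV. \<Sum>j\<in>UNIV. G h j * (ang h k * N j)) = N k"
proof -
  have "(\<Sum>h\<in>UNIV. \<Sum>j\<in>UNIV. G h j * (ang h k * N j)) = (\<Sum>j\<in>UNIV. \<Sum>h\<in>UNIV. G h j * (ang h k * N j))"
    by (rule sum.swap)
  also have "\<dots> = (\<Sum>j\<in>UNIV. (\<Sum>h\<in>UNIV. ang k h * G h j) * N j)"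
    by (intro sum.cong refl) (simp add: sum_distrib_right sum_distrib_left ang_sym[of _ k] mult_ac)
  also have "\<dots> = (\<Sum>j\<in>UNIV. ((if k = j then 1 else 0) - l k * y$j / Lv) * N j)"
    by (simp only: ang_inv)
  also have "\<dots> = (\<Sum>j\<in>UNIV. (if k = j then 1 else 0) * N j - l k / Lv * (N j * y$j))"
    by (intro sum.cong refl) (simp add: algebra_simps)
  also have "\<dots> = N k - l k / Lv * (\<Sum>j\<in>UNIV. N j * y$j)"
    by (simp add: sum_subtractf sum_distrib_left)
  finally show ?thesis using Ny by simp
qed

lemma Sric_of_kn_product:
  assumes S: "\<And>h i j k. S3_of G C h i j k = kn_product ang N h i j k"
    and N_sym: "\<And>i j. N i j = N j i"
    and N_y: "\<And>i. (\<Sum>j\<in>UNIV. N i j * y$j) = 0"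
  shows "Sric_of G C i k = (real CARD('n) - 3) * N i k + (\<Sum>h\<in>UNIV. \<Sum>j\<in>UNIV. G h j * N j h) * ang i k"
proof -
  let ?S = "\<lambda>f. \<Sum>h\<in>UNIV. \<Sum>j\<in>UNIV. G h j * f h j"
  have "?S (\<lambda>h j. ang j h * N i k) = ?S (\<lambda>h j. ang j h) * N i k"
    by (simp only: sum_distrib_right mult.assoc)
  then have P1: "?S (\<lambda>h j. ang j h * N i k) = (real CARD('n) - 1) * N i k"
    using trace_inv_ang by simp
  have P2: "?S (\<lambda>h j. ang i k * N j h) = (\<Sum>h\<in>UNIV. \<Sum>j\<in>UNIV. G h j * N j h) * ang i k"
    by (simp add: sum_distrib_left sum_distrib_right mult_ac)
  have P3: "?S (\<lambda>h j. ang h k * N i j) = N i k"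
    using contract_inv_ang[OF N_y[of i], of k] .
  have "?S (\<lambda>h j. ang i j * N h k) = (\<Sum>h\<in>UNIV. \<Sum>j\<in>UNIV. G j h * (ang j i * N k h))"
    by (intro sum.cong refl) (metis inv_sym ang_sym N_sym)
  also have "\<dots> = (\<Sum>j\<in>UNIV. \<Sum>h\<in>UNIV. G j h * (ang j i * N k h))"
    by (rule sum.swap)
  also have "\<dots> = N i k"
    using contract_inv_ang[OF N_y[of k], of i] N_sym[of k i] by simp
  finally have P4: "?S (\<lambda>h j. ang i j * N h k) = N i k" .
  have "Sric_of G C i k = ?S (\<lambda>h j. ang j h * N i k) + ?S (\<lambda>h j. ang i k * N j h)
      - ?S (\<lambda>h j. ang h k * N i j) - ?S (\<lambda>h j. ang i j * N h k)"
    unfolding Sric_of_def S kn_product_def by (simp add: algebra_simps sum.distrib sum_subtractf)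
  then show ?thesis unfolding P1 P2 P3 P4 by (simp add: algebra_simps)
qed

lemma Mt_of_kn_product:
  assumes n: "real CARD('n) > 3"
    and S: "\<And>h i j k. S3_of G C h i j k = kn_product ang N h i j k"
    and N_sym: "\<And>i j. N i j = N j i"
    and N_y: "\<And>i. (\<Sum>j\<in>UNIV. N i j * y$j) = 0"
  shows "Mt_of G C ang i j = N i j"
proof -
  let ?n = "real CARD('n)"
  define \<nu> where "\<nu> = (\<Sum>h\<in>UNIV. \<Sum>j\<in>UNIV. G h j * N j h)"
  have Ric: "Sric_of G C i k = (?n - 3) * N i k + \<nu> * ang i k" for i k
    unfolding \<nu>_def by (rule Sric_of_kn_product[OF S N_sym N_y])
  have "Sscal_of G C = (\<Sum>i\<in>UNIV. \<Sum>k\<in>UNIV. (?n - 3) * (G i k * N i k) + \<nu> * (G i k * ang i k))"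
    unfolding Sscal_of_def Ric by (simp add: algebra_simps)
  also have "\<dots> = (?n - 3) * (\<Sum>i\<in>UNIV. \<Sum>k\<in>UNIV. G i k * N i k)
      + \<nu> * (\<Sum>i\<in>UNIV. \<Sum>k\<in>UNIV. G i k * ang i k)"
    by (simp add: sum.distrib sum_distrib_left)
  also have "\<dots> = (2 * ?n - 4) * \<nu>"
  proof -
    have "(\<Sum>i\<in>UNIV. \<Sum>k\<in>UNIV. G i k * N i k) = \<nu>" unfolding \<nu>_def by (simp add: N_sym)
    moreover have "(\<Sum>i\<in>UNIV. \<Sum>k\<in>UNIV. G i k * ang i k) = ?n - 1"
      using trace_inv_ang by (simp add: ang_sym)
    ultimately show ?thesis by (simp only:) (simp add: algebra_simps)
  qed
  finally have Sc: "Sscal_of G C = (2 * ?n - 4) * \<nu>" .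
  have "(2 * ?n - 4) * \<nu> * ang i j / (2 * (?n - 2)) = \<nu> * ang i j"
    using n by (simp add: field_simps)
  then show ?thesis unfolding Mt_of_def Ric Sc using n by simp
qed

lemma Sric_of_sym: "Sric_of G cart i k = Sric_of G cart k i"
proof -
  let ?T = "\<lambda>i k. \<Sum>h\<in>UNIV. \<Sum>j\<in>UNIV. G h j * inv_form G (cart i j) (cart h k)"
  let ?U = "\<lambda>i k. \<Sum>h\<in>UNIV. \<Sum>j\<in>UNIV. G h j * inv_form G (cart i k) (cart h j)"
  have Sric: "Sric_of G cart i k = ?T i k - ?U i k" for i k
    unfolding Sric_of_def S3_of_inv_form by (simp add: right_diff_distrib sum_subtractf)
  have cart_fun_sym: "cart a b = cart b a" for a b by (rule ext) (rule cart_sym12)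
  have "?T k i = (\<Sum>j\<in>UNIV. \<Sum>h\<in>UNIV. G h j * inv_form G (cart k j) (cart h i))"
    by (rule sum.swap)
  also have "\<dots> = ?T i k"
    by (intro sum.cong refl) (metis inv_sym inv_form_sym cart_fun_sym)
  finally show ?thesis unfolding Sric using cart_fun_sym[of i k] by simp
qed

lemma Mt_of_sym: "Mt_of G cart ang i k = Mt_of G cart ang k i"
  unfolding Mt_of_def using Sric_of_sym ang_sym by metis

lemma Sric_of_y: "(\<Sum>k\<in>UNIV. Sric_of G cart i k * y$k) = 0"
proof -
  have "(\<Sum>k\<in>UNIV. Sric_of G cart i k * y$k)
      = (\<Sum>k\<in>UNIV. \<Sum>h\<in>UNIV. \<Sum>j\<in>UNIV. G h j * (S3_of G cart h i j k * y$k))"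
    unfolding Sric_of_def by (simp only: sum_distrib_right mult.assoc)
  also have "\<dots> = (\<Sum>h\<in>UNIV. \<Sum>j\<in>UNIV. \<Sum>k\<in>UNIV. G h j * (S3_of G cart h i j k * y$k))"
    by (subst sum.swap) (rule sum.cong[OF refl], rule sum.swap)
  also have "\<dots> = (\<Sum>h\<in>UNIV. \<Sum>j\<in>UNIV. G h j * (\<Sum>k\<in>UNIV. S3_of G cart h i j k * y$k))"
    by (simp only: sum_distrib_left)
  also have "\<dots> = 0" using S3_of_y by simp
  finally show ?thesis .
qed

lemma Mt_of_y: "(\<Sum>k\<in>UNIV. Mt_of G cart ang i k * y$k) = 0"
proof -
  let ?n = "real CARD('n)"
  have "(\<Sum>k\<in>UNIV. Mt_of G cart ang i k * y$k)
     = 1 / (?n - 3) * ((\<Sum>k\<in>UNIV. Sric_of G cart i k * y$k)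
        - Sscal_of G cart / (2 * (?n - 2)) * (\<Sum>k\<in>UNIV. ang i k * y$k))"
    unfolding Mt_of_def
    by (simp add: sum_distrib_left sum_distrib_right sum_subtractf algebra_simps sum_divide_distrib)
  also have "\<dots> = 0" using Sric_of_y ang_y by simp
  finally show ?thesis .
qed

lemma l_inv_orth:
  assumes Y: "(\<Sum>r\<in>UNIV. Y r * y$r) = 0"
  shows "(\<Sum>q\<in>UNIV. l q * (\<Sum>s\<in>UNIV. G q s * Y s)) = 0"
proof -
  have "(\<Sum>q\<in>UNIV. l q * (\<Sum>s\<in>UNIV. G q s * Y s)) = (\<Sum>s\<in>UNIV. (\<Sum>q\<in>UNIV. l q * G q s) * Y s)"
    by (rule contract_assoc[symmetric])
  also have "\<dots> = (\<Sum>s\<in>UNIV. Y s * y$s) / Lv"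
    by (simp add: l_inv sum_divide_distrib mult.commute)
  finally show ?thesis using Y by simp
qed

lemma H_inv_orth:
  assumes Y: "(\<Sum>r\<in>UNIV. Y r * y$r) = 0"
  shows "(\<Sum>q\<in>UNIV. H i q * (\<Sum>s\<in>UNIV. G q s * Y s)) = Y i / Lv"
proof -
  have "Lv * (\<Sum>q\<in>UNIV. H i q * (\<Sum>s\<in>UNIV. G q s * Y s)) = inv_form G (ang i) Y"
    unfolding inv_form_def angular_form_def by (simp add: sum_distrib_left mult.assoc)
  also have "\<dots> = Y i" by (rule inv_form_ang_left[OF Y])
  finally show ?thesis using Lv_nonzero by (simp add: field_simps)
qed

end

section \<open>The conformal \<open>\<beta>\<close>-change at a point\<close>

locale beta_change_jet = o: finsler_jet y Lv l H T G + s: finsler_jet y Lv' l' H' T' G'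
  for y :: "real^'n::finite" and Lv l H T G Lv' l' H' T' G' +
  fixes c :: real and b :: "'n \<Rightarrow> real"
  assumes c_nonzero: "c \<noteq> 0"
    and Lv'_eq: "Lv' = c * Lv + (\<Sum>i\<in>UNIV. b i * y$i)"
    and l'_eq: "\<And>i. l' i = c * l i + b i"
    and H'_eq: "\<And>i j. H' i j = c * H i j"
    and T'_eq: "\<And>i j k. T' i j k = c * T i j k"
begin

definition "beta = (\<Sum>i\<in>UNIV. b i * y$i)"
definition "tau = Lv' / Lv"
definition "m i = b i - beta / Lv * l i"

lemma tau_nonzero: "tau \<noteq> 0"
  unfolding tau_def using o.Lv_nonzero s.Lv_nonzero by simp

lemma m_y: "(\<Sum>i\<in>UNIV. m i * y$i) = 0"
proof -
  have "(\<Sum>i\<in>UNIV. m i * y$i) = (\<Sum>i\<in>UNIV. b i * y$i) - beta / Lv * (\<Sum>i\<in>UNIV. l i * y$i)"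
    unfolding m_def by (simp add: left_diff_distrib sum_subtractf sum_distrib_left mult.assoc)
  then show ?thesis using o.euler_l o.Lv_nonzero unfolding beta_def by simp
qed

lemma ang'_eq: "s.ang i j = c * tau * o.ang i j"
  unfolding angular_form_def H'_eq tau_def using o.Lv_nonzero by simp

lemma cart'_eq: "s.cart i j = (\<lambda>r. c * tau * o.cart i j r
   + (c / (2 * Lv) * o.ang i j * m r + (c / (2 * Lv) * m j * o.ang i r + c / (2 * Lv) * m i * o.ang j r)))"
proof
  fix r
  have Lv': "Lv' = c * Lv + beta" unfolding beta_def by (rule Lv'_eq)
  show "s.cart i j r = c * tau * o.cart i j r
   + (c / (2 * Lv) * o.ang i j * m r + (c / (2 * Lv) * m j * o.ang i r + c / (2 * Lv) * m i * o.ang j r))"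
    unfolding tau_def unfolding cartan_form_def angular_form_def l'_eq H'_eq T'_eq m_def Lv'
    using o.Lv_nonzero o.H_sym[of i r] o.H_sym[of j r] by (simp add: field_simps)
qed

text \<open>On covectors \<open>Y\<close> annihilating \<open>y\<close>, this is the new inverse metric applied to \<open>Y\<close>.\<close>

definition "inv'_vec Y r =
  ((\<Sum>s\<in>UNIV. G r s * Y s) - (\<Sum>q\<in>UNIV. b q * (\<Sum>s\<in>UNIV. G q s * Y s)) / Lv' * y$r) / (c * tau)"

lemma fund'_inv'_vec:
  assumes Y: "(\<Sum>r\<in>UNIV. Y r * y$r) = 0"
  shows "(\<Sum>q\<in>UNIV. s.fund i q * inv'_vec Y q) = Y i"
proof -
  define GY where "GY r = (\<Sum>s\<in>UNIV. G r s * Y s)" for r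
  define \<kappa> where "\<kappa> = (\<Sum>q\<in>UNIV. b q * GY q) / Lv'"
  have w: "inv'_vec Y q = (GY q - \<kappa> * y$q) / (c * tau)" for q
    unfolding inv'_vec_def GY_def \<kappa>_def ..
  have ctau: "c * tau \<noteq> 0" using c_nonzero tau_nonzero by simp
  have lin: "(\<Sum>q\<in>UNIV. f q * inv'_vec Y q)
      = ((\<Sum>q\<in>UNIV. f q * GY q) - \<kappa> * (\<Sum>q\<in>UNIV. f q * y$q)) / (c * tau)" for f
    unfolding w by (simp add: sum_divide_distrib[symmetric] sum_subtractf sum_distrib_left right_diff_distrib mult_ac)
  have "(\<Sum>q\<in>UNIV. l' q * GY q) = c * (\<Sum>q\<in>UNIV. l q * GY q) + (\<Sum>q\<in>UNIV. b q * GY q)"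
    unfolding l'_eq by (simp add: distrib_right sum.distrib sum_distrib_left mult.assoc)
  then have "(\<Sum>q\<in>UNIV. l' q * GY q) = \<kappa> * Lv'"
    using o.l_inv_orth[OF Y] s.Lv_nonzero unfolding \<kappa>_def GY_def by simp
  then have l'w: "(\<Sum>q\<in>UNIV. l' q * inv'_vec Y q) = 0"
    using s.euler_l by (simp add: lin)
  have Hw: "(\<Sum>q\<in>UNIV. H i q * inv'_vec Y q) = Y i / Lv / (c * tau)"
    using o.H_inv_orth[OF Y] o.euler_H by (simp add: lin GY_def)
  have "(\<Sum>q\<in>UNIV. s.fund i q * inv'_vec Y q)
      = (\<Sum>q\<in>UNIV. l' i * (l' q * inv'_vec Y q) + (Lv' * c) * (H i q * inv'_vec Y q))"
    by (intro sum.cong refl) (simp add: fund_form_def H'_eq algebra_simps)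
  also have "\<dots> = l' i * (\<Sum>q\<in>UNIV. l' q * inv'_vec Y q) + Lv' * c * (\<Sum>q\<in>UNIV. H i q * inv'_vec Y q)"
    by (simp only: sum.distrib sum_distrib_left[symmetric])
  also have "\<dots> = Y i" using l'w Hw ctau o.Lv_nonzero unfolding tau_def by (simp add: field_simps)
  finally show ?thesis .
qed

lemma inv'_apply:
  assumes Y: "(\<Sum>r\<in>UNIV. Y r * y$r) = 0"
  shows "(\<Sum>s\<in>UNIV. G' r s * Y s) = inv'_vec Y r"
proof -
  have "(\<Sum>s\<in>UNIV. G' r s * Y s) = (\<Sum>s\<in>UNIV. G' r s * (\<Sum>q\<in>UNIV. s.fund s q * inv'_vec Y q))"
    using fund'_inv'_vec[OF Y] by simp
  also have "\<dots> = (\<Sum>q\<in>UNIV. (\<Sum>s\<in>UNIV. G' r s * s.fund s q) * inv'_vec Y q)"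
    by (rule contract_assoc[symmetric])
  also have "\<dots> = inv'_vec Y r" by (simp add: s.inv_fund)
  finally show ?thesis .
qed

lemma inv_form'_eq:
  assumes X: "(\<Sum>r\<in>UNIV. X r * y$r) = 0" and Y: "(\<Sum>r\<in>UNIV. Y r * y$r) = 0"
  shows "inv_form G' X Y = inv_form G X Y / (c * tau)"
proof -
  define \<kappa> where "\<kappa> = (\<Sum>q\<in>UNIV. b q * (\<Sum>s\<in>UNIV. G q s * Y s)) / Lv'"
  have "inv_form G' X Y = (\<Sum>r\<in>UNIV. X r * (((\<Sum>s\<in>UNIV. G r s * Y s) - \<kappa> * y$r) / (c * tau)))"
    unfolding inv_form_def inv'_apply[OF Y] inv'_vec_def \<kappa>_def ..
  also have "\<dots> = (inv_form G X Y - \<kappa> * (\<Sum>r\<in>UNIV. X r * y$r)) / (c * tau)"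
    unfolding inv_form_def
    by (simp add: sum_divide_distrib[symmetric] sum_subtractf sum_distrib_left right_diff_distrib mult_ac)
  finally show ?thesis using X by simp
qed

definition "M_shift a d = - inv_form G (o.cart a d) m / (2 * tau * Lv)
  - (m a * m d + inv_form G m m * o.ang a d / 2) / (4 * tau^2 * Lv^2)"

lemma S3_of_change:
  "S3_of G' s.cart h i j k = c * tau * (S3_of G o.cart h i j k + kn_product o.ang M_shift h i j k)"
proof -
  have ctau: "c * tau \<noteq> 0" using c_nonzero tau_nonzero by simp
  have eval: "inv_form G (o.ang a) (o.ang d) = o.ang d a" "inv_form G (o.ang a) m = m a"
    "inv_form G m (o.ang a) = m a" "inv_form G (o.ang a) (o.cart d e) = o.cart d e a"
    "inv_form G (o.cart d e) (o.ang a) = o.cart d e a"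
    "inv_form G m (o.cart d e) = inv_form G (o.cart d e) m" for a d e
    by (fact o.inv_form_ang_left[OF o.ang_y] o.inv_form_ang_left[OF m_y] o.inv_form_ang_right[OF m_y]
        o.inv_form_ang_left[OF o.cart_y] o.inv_form_ang_right[OF o.cart_y] o.inv_form_sym)+
  have ang_s: "o.ang h j = o.ang j h" "o.ang k i = o.ang i k" "o.ang k h = o.ang h k"
    "o.ang j i = o.ang i j" "o.ang i h = o.ang h i" "o.ang k j = o.ang j k"
    by (simp_all add: o.ang_sym)
  have cart_s: "o.cart h j i = o.cart i j h" "o.cart i k h = o.cart h k i"
    "o.cart i k j = o.cart i j k" "o.cart h j k = o.cart h k j"
    by (metis o.cart_sym12 o.cart_sym23)+
  have cart_m: "inv_form G (o.cart j h) m = inv_form G (o.cart h j) m"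
    using o.cart_sym12 by (metis ext)
  have "S3_of G' s.cart h i j k
      = (inv_form G (s.cart i j) (s.cart h k) - inv_form G (s.cart i k) (s.cart h j)) / (c * tau)"
    unfolding s.S3_of_inv_form using inv_form'_eq[OF s.cart_y s.cart_y] by (simp add: diff_divide_distrib)
  also have "\<dots> = c * tau * (S3_of G o.cart h i j k + kn_product o.ang M_shift h i j k)"
    unfolding cart'_eq o.S3_of_inv_form using ctau o.Lv_nonzero tau_nonzero c_nonzero
    by (simp only: inv_form_add_left inv_form_add_right inv_form_cmult_left inv_form_cmult_right eval,
        simp only: ang_s cart_s, unfold kn_product_def M_shift_def cart_m, simp add: field_simps, algebra)
  finally show ?thesis .
qed

lemma M_shift_sym: "M_shift a d = M_shift d a"
  unfolding M_shift_def using o.ang_sym[of a d] o.cart_sym12 by (metis ext mult.commute)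

lemma M_shift_y: "(\<Sum>d\<in>UNIV. M_shift a d * y$d) = 0"
proof -
  have "(\<Sum>d\<in>UNIV. M_shift a d * y$d) = (\<Sum>d\<in>UNIV. - 1 / (2 * tau * Lv) * (inv_form G (o.cart a d) m * y$d)
     - m a / (4 * tau^2 * Lv^2) * (m d * y$d) - inv_form G m m / (8 * tau^2 * Lv^2) * (o.ang a d * y$d))"
    unfolding M_shift_def using o.Lv_nonzero tau_nonzero by (intro sum.cong refl) (simp add: field_simps)
  also have "\<dots> = - 1 / (2 * tau * Lv) * (\<Sum>d\<in>UNIV. inv_form G (o.cart a d) m * y$d)
     - m a / (4 * tau^2 * Lv^2) * (\<Sum>d\<in>UNIV. m d * y$d)
     - inv_form G m m / (8 * tau^2 * Lv^2) * (\<Sum>d\<in>UNIV. o.ang a d * y$d)"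
    by (simp only: sum_subtractf sum_distrib_left)
  also have "\<dots> = 0" using o.inv_form_cart_y m_y o.ang_y by simp
  finally show ?thesis .
qed

lemma S4_like_of_transfer:
  assumes n: "real CARD('n) > 3" and S4: "S4_like_of G o.cart o.ang"
  shows "S4_like_of G' s.cart s.ang"
proof -
  define N where "N a d = Mt_of G o.cart o.ang a d + M_shift a d" for a d
  have S3': "S3_of G' s.cart h i j k = kn_product s.ang N h i j k" for h i j k
    using S3_of_change[of h i j k] S4 unfolding S4_like_of_def kn_product_def N_def ang'_eq
    by (simp add: algebra_simps)
  have "N a d = N d a" for a d unfolding N_def using o.Mt_of_sym M_shift_sym by simp
  moreover have "(\<Sum>d\<in>UNIV. N a d * y$d) = 0" for a
    unfolding N_def using o.Mt_of_y M_shift_y by (simp add: distrib_right sum.distrib)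
  ultimately have "Mt_of G' s.cart s.ang = N"
    using s.Mt_of_kn_product[OF n S3'] by (intro ext) blast
  then show ?thesis unfolding S4_like_of_def using S3' by simp
qed

lemma beta_change_jet_inverse: "beta_change_jet y Lv' l' H' T' G' Lv l H T G (1 / c) (\<lambda>i. - b i / c)"
proof (intro beta_change_jet.intro beta_change_jet_axioms.intro s.finsler_jet_axioms o.finsler_jet_axioms)
  have "(\<Sum>i\<in>UNIV. - b i / c * y$i) = - (\<Sum>i\<in>UNIV. b i * y$i) / c"
    by (simp add: sum_divide_distrib[symmetric] sum_negf)
  then show "Lv = 1 / c * Lv' + (\<Sum>i\<in>UNIV. - b i / c * y$i)"
    using Lv'_eq c_nonzero by (simp add: field_simps)
qed (use c_nonzero in \<open>simp_all add: l'_eq H'_eq T'_eq field_simps\<close>)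

lemma S4_like_of_iff:
  "real CARD('n) > 3 \<Longrightarrow> S4_like_of G o.cart o.ang \<longleftrightarrow> S4_like_of G' s.cart s.ang"
  using S4_like_of_transfer beta_change_jet.S4_like_of_transfer[OF beta_change_jet_inverse] by blast

end

section \<open>Finsler metrics\<close>

lemma iter_pdir_slice:
  fixes z :: "'b::euclidean_space"
  shows "iter_pdir (map (\<lambda>v. (0::'a::euclidean_space, v)) vs) f (x, z) = iter_pdir vs (\<lambda>z. f (x, z)) z"
proof (induction vs arbitrary: x z)
  case (Cons v vs)
  have "(x, z) + t *\<^sub>R (0::'a, v) = (x, z + t *\<^sub>R v)" for t by simp
  then show ?case by (simp add: pdir_def Cons.IH)
qed simp

lemma smooth_on_slice:
  fixes f :: "'a::euclidean_space \<Rightarrow> 'b::euclidean_space \<Rightarrow> real"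
  assumes f: "smooth_on (U \<times> V) (\<lambda>(x, z). f x z)" and x: "x \<in> U"
  shows "smooth_on V (f x)"
  unfolding smooth_on_def
proof (intro allI impI ballI)
  fix vs :: "'b list" and p assume vs: "set vs \<subseteq> Basis" and p: "p \<in> V"
  let ?ws = "map (\<lambda>v. (0::'a, v)) vs"
  have "set ?ws \<subseteq> Basis" using vs by (auto simp: Basis_prod_def)
  then have "iter_pdir ?ws (\<lambda>(x, z). f x z) differentiable (at (x, p))"
    using f x p unfolding smooth_on_def by blast
  moreover have "(\<lambda>z. (x, z)) differentiable (at p)"
    by (auto intro!: derivative_intros)
  ultimately have "(iter_pdir ?ws (\<lambda>(x, z). f x z) \<circ> (\<lambda>z. (x, z))) differentiable (at p)"
    using differentiable_chain_at by (metis (no_types, lifting))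
  moreover have "iter_pdir ?ws (\<lambda>(x, z). f x z) \<circ> (\<lambda>z. (x, z)) = iter_pdir vs (f x)"
    by (rule ext) (simp add: iter_pdir_slice)
  ultimately show "iter_pdir vs (f x) differentiable (at p)" by simp
qed

lemma finsler_metric_smooth_fibre:
  "finsler_metric U L \<Longrightarrow> x \<in> U \<Longrightarrow> smooth_on (UNIV - {0}) (L x)"
  unfolding finsler_metric_def by (blast intro: smooth_on_slice)

lemma finsler_metric_homogeneous:
  "finsler_metric U L \<Longrightarrow> x \<in> U \<Longrightarrow> t > 0 \<Longrightarrow> L x (t *\<^sub>R w) = t * L x w"
  unfolding finsler_metric_def by blast

definition grad :: "(real^'n::finite \<Rightarrow> real) \<Rightarrow> real^'n \<Rightarrow> 'n \<Rightarrow> real" where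
  "grad f y i = pd i f y"

definition hess :: "(real^'n::finite \<Rightarrow> real) \<Rightarrow> real^'n \<Rightarrow> 'n \<Rightarrow> 'n \<Rightarrow> real" where
  "hess f y i j = pd i (pd j f) y"

definition hess3 :: "(real^'n::finite \<Rightarrow> real) \<Rightarrow> real^'n \<Rightarrow> 'n \<Rightarrow> 'n \<Rightarrow> 'n \<Rightarrow> real" where
  "hess3 f y i j k = pd i (pd j (pd k f)) y"

lemma gt_eq_fund_form:
  fixes L :: "real^'n::finite \<Rightarrow> real^'n \<Rightarrow> real"
  assumes f: "smooth_on (UNIV - {0}) (L x)" and y: "y \<noteq> 0"
  shows "gt L x y i j = fund_form (grad (L x) y) (L x y) (hess (L x) y) i j"
proof -
  have "pd j (\<lambda>z. (L x z)^2) z = 2 * L x z * pd j (L x) z" if "z \<in> UNIV - {0}" for z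
    using pd_mult[OF smooth_on_differentiable[OF f that] smooth_on_differentiable[OF f that], of j]
    by (simp add: power2_eq_square)
  then have "pd i (pd j (\<lambda>z. (L x z)^2)) y = pd i (\<lambda>z. 2 * L x z * pd j (L x) z) y"
    by (intro pd_cong_open[OF open_punctured]) (use y in auto)
  also have "\<dots> = pd i (\<lambda>z. 2 * L x z) y * pd j (L x) y + 2 * L x y * pd i (pd j (L x)) y"
    by (rule pd_mult) (use smooth_on_derivs_differentiable[OF f] y in auto)
  also have "pd i (\<lambda>z. 2 * L x z) y = 2 * pd i (L x) y"
    by (rule pd_cmult) (use smooth_on_derivs_differentiable[OF f] y in auto)
  finally show ?thesis unfolding gt_def fund_form_def grad_def hess_def by simp
qed

lemma ht_eq_angular_form:
  fixes L :: "real^'n::finite \<Rightarrow> real^'n \<Rightarrow> real"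
  assumes "smooth_on (UNIV - {0}) (L x)" and "y \<noteq> 0"
  shows "ht L x y = angular_form (L x y) (hess (L x) y)"
  by (intro ext)
    (simp add: ht_def gt_eq_fund_form[of L x y, OF assms] fund_form_def angular_form_def lt_def grad_def)

lemma ct_eq_cartan_form:
  fixes L :: "real^'n::finite \<Rightarrow> real^'n \<Rightarrow> real"
  assumes f: "smooth_on (UNIV - {0}) (L x)" and y: "y \<noteq> 0"
  shows "ct L x y = cartan_form (grad (L x) y) (L x y) (hess (L x) y) (hess3 (L x) y)"
proof (intro ext)
  fix i j k
  let ?F = "L x"
  have d: "\<And>g. g \<in> {?F, pd i ?F, pd j ?F, pd i (pd j ?F)} \<Longrightarrow> g differentiable (at y)"
    using smooth_on_derivs_differentiable[OF f] y by auto
  have "gt L x z i j = pd i ?F z * pd j ?F z + ?F z * pd i (pd j ?F) z" if "z \<in> UNIV - {0}" for z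
    using gt_eq_fund_form[of L x z i j, OF f] that by (simp add: fund_form_def grad_def hess_def)
  then have "pd k (\<lambda>z. gt L x z i j) y = pd k (\<lambda>z. pd i ?F z * pd j ?F z + ?F z * pd i (pd j ?F) z) y"
    by (intro pd_cong_open[OF open_punctured]) (use y in auto)
  also have "\<dots> = pd k (\<lambda>z. pd i ?F z * pd j ?F z) y + pd k (\<lambda>z. ?F z * pd i (pd j ?F) z) y"
    by (rule pd_add) (use d in \<open>auto intro: differentiable_mult\<close>)
  also have "\<dots> = pd k (pd i ?F) y * pd j ?F y + pd i ?F y * pd k (pd j ?F) y
      + (pd k ?F y * pd i (pd j ?F) y + ?F y * pd k (pd i (pd j ?F)) y)"
    using d by (simp add: pd_mult)
  finally show "ct L x y i j k = cartan_form (grad ?F y) (L x y) (hess ?F y) (hess3 ?F y) i j k"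
    unfolding ct_def cartan_form_def grad_def hess_def hess3_def by (simp add: algebra_simps)
qed

lemma S4_like_iff_S4_like_of:
  fixes L :: "real^'n::finite \<Rightarrow> real^'n \<Rightarrow> real"
  assumes L: "finsler_metric U L"
  shows "S4_like U L \<longleftrightarrow> (\<forall>x\<in>U. \<forall>y. y \<noteq> 0 \<longrightarrow>
     S4_like_of (ginv L x y) (cartan_form (grad (L x) y) (L x y) (hess (L x) y) (hess3 (L x) y))
       (angular_form (L x y) (hess (L x) y)))"
proof -
  have S3: "S3 L x y = S3_of (ginv L x y) (ct L x y)" for x y
    by (intro ext) (simp add: S3_def S3_of_def cmix_def)
  have Sric: "Sric L x y = Sric_of (ginv L x y) (ct L x y)" for x y
    by (intro ext) (simp add: Sric_def Sric_of_def S3)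
  have Mt: "Mt L x y = Mt_of (ginv L x y) (ct L x y) (ht L x y)" for x y
    by (intro ext) (simp add: Mt_def Mt_of_def Sric Sscal_def Sscal_of_def)
  have "S4_like U L \<longleftrightarrow> (\<forall>x\<in>U. \<forall>y. y \<noteq> 0 \<longrightarrow> S4_like_of (ginv L x y) (ct L x y) (ht L x y))"
    unfolding S4_like_def S4_like_of_def kn_product_def S3 Mt by simp
  then show ?thesis
    using ct_eq_cartan_form[OF finsler_metric_smooth_fibre[OF L]]
      ht_eq_angular_form[OF finsler_metric_smooth_fibre[OF L]]
    by auto
qed

lemma matrix_inv_mult:
  fixes A :: "real^'n::finite^'n"
  assumes "invertible A"
  shows "A ** matrix_inv A = mat 1" "matrix_inv A ** A = mat 1"
proof -
  have "\<exists>A'. A ** A' = mat 1 \<and> A' ** A = mat 1" using assms unfolding invertible_def .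
  then have "A ** matrix_inv A = mat 1 \<and> matrix_inv A ** A = mat 1"
    unfolding matrix_inv_def by (rule someI_ex)
  then show "A ** matrix_inv A = mat 1" "matrix_inv A ** A = mat 1" by auto
qed

lemma finsler_metric_gmat_invertible:
  fixes L :: "real^'n::finite \<Rightarrow> real^'n \<Rightarrow> real"
  assumes L: "finsler_metric U L" and x: "x \<in> U" and y: "y \<noteq> 0"
  shows "invertible (gmat L x y)"
  unfolding invertible_left_inverse matrix_left_invertible_ker
proof (intro allI impI, rule ccontr)
  fix v :: "real^'n" assume v: "gmat L x y *v v = 0" and "v \<noteq> 0"
  then have "(\<Sum>i\<in>UNIV. \<Sum>j\<in>UNIV. gt L x y i j * v$i * v$j) > 0"
    using L x y unfolding finsler_metric_def by blast
  moreover have "(\<Sum>i\<in>UNIV. \<Sum>j\<in>UNIV. gt L x y i j * v$i * v$j) = (\<Sum>i\<in>UNIV. v$i * (gmat L x y *v v)$i)"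
    by (simp add: matrix_vector_mult_def gmat_def sum_distrib_left mult_ac)
  ultimately show False using v by simp
qed

lemma finsler_jet_at:
  fixes L :: "real^'n::finite \<Rightarrow> real^'n \<Rightarrow> real"
  assumes L: "finsler_metric U L" and x: "x \<in> U" and y: "y \<noteq> 0"
  shows "finsler_jet y (L x y) (grad (L x) y) (hess (L x) y) (hess3 (L x) y) (ginv L x y)"
proof -
  have f: "smooth_on (UNIV - {0}) (L x)" by (rule finsler_metric_smooth_fibre[OF L x])
  have hom: "\<And>w t. t > 0 \<Longrightarrow> L x (t *\<^sub>R w) = t * L x w"
    by (rule finsler_metric_homogeneous[OF L x])
  have inv: "invertible (gmat L x y)" by (rule finsler_metric_gmat_invertible[OF L x y])
  have gmat: "gmat L x y $ i $ j = fund_form (grad (L x) y) (L x y) (hess (L x) y) i j" for i j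
    unfolding gmat_def using gt_eq_fund_form[of L x y i j, OF f y] by simp
  show ?thesis
  proof
    have "L x y > 0" using L x y unfolding finsler_metric_def by blast
    then show "L x y \<noteq> 0" by simp
    show "hess (L x) y i j = hess (L x) y j i" for i j
      unfolding hess_def by (rule pd_pd_commute[OF f y])
    show "hess3 (L x) y i j k = hess3 (L x) y j i k" for i j k
      unfolding hess3_def by (rule pd_pd_pd_commute12[OF f y])
    show "hess3 (L x) y i j k = hess3 (L x) y i k j" for i j k
      unfolding hess3_def by (rule pd_pd_pd_commute23[OF f y])
    show "(\<Sum>i\<in>UNIV. grad (L x) y i * y$i) = L x y"
      unfolding grad_def by (rule euler_identities(1)[OF f hom y])
    show "(\<Sum>j\<in>UNIV. hess (L x) y i j * y$j) = 0" for i
      using euler_identities(2)[OF f hom y, of i] pd_pd_commute[OF f y] unfolding hess_def by simp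
    show "(\<Sum>k\<in>UNIV. hess3 (L x) y i j k * y$k) = - hess (L x) y i j" for i j
    proof -
      have "pd i (pd j (pd k (L x))) y = pd k (pd i (pd j (L x))) y" for k
        using pd_pd_pd_commute23[OF f y, of i j k] pd_pd_pd_commute12[OF f y, of i k j] by simp
      then show ?thesis using euler_identities(3)[OF f hom y, of i j] unfolding hess3_def hess_def by simp
    qed
    show "(\<Sum>j\<in>UNIV. fund_form (grad (L x) y) (L x y) (hess (L x) y) i j * ginv L x y j k)
        = (if i = k then 1 else 0)" for i k
      using arg_cong[OF matrix_inv_mult(1)[OF inv], of "\<lambda>A. A $ i $ k"]
      unfolding matrix_matrix_mult_def mat_def ginv_def by (simp add: gmat)
    show "(\<Sum>j\<in>UNIV. ginv L x y i j * fund_form (grad (L x) y) (L x y) (hess (L x) y) j k)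
        = (if i = k then 1 else 0)" for i k
      using arg_cong[OF matrix_inv_mult(2)[OF inv], of "\<lambda>A. A $ i $ k"]
      unfolding matrix_matrix_mult_def mat_def ginv_def by (simp add: gmat)
  qed
qed

lemma derivs_beta_change:
  fixes f :: "real^'n::finite \<Rightarrow> real" and c :: real and b :: "'n \<Rightarrow> real"
  defines "f' \<equiv> \<lambda>z. c * f z + (\<Sum>i\<in>UNIV. b i * z$i)"
  assumes f: "smooth_on (UNIV - {0}) f" and y: "y \<noteq> 0"
  shows "grad f' y i = c * grad f y i + b i"
    and "hess f' y i j = c * hess f y i j"
    and "hess3 f' y i j k = c * hess3 f y i j k"
proof -
  have lin: "(\<lambda>z::real^'n. \<Sum>j\<in>UNIV. b j * z$j) differentiable (at z)" for z
    unfolding differentiable_def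
    by (auto intro!: derivative_eq_intros bounded_linear_imp_has_derivative[OF bounded_linear_vec_nth])
  have d1: "pd i f' z = c * pd i f z + b i" if "z \<in> UNIV - {0}" for z i
    unfolding f'_def using smooth_on_differentiable[OF f that] lin
    by (simp add: pd_add pd_cmult pd_linear differentiable_mult)
  then show "grad f' y i = c * grad f y i + b i" unfolding grad_def using y by simp
  have d2: "pd i (pd j f') z = c * pd i (pd j f) z" if "z \<in> UNIV - {0}" for z i j
  proof -
    have "pd i (pd j f') z = pd i (\<lambda>z. c * pd j f z + b j) z"
      by (rule pd_cong_open[OF open_punctured that]) (simp add: d1)
    also have "\<dots> = c * pd i (pd j f) z"
      using smooth_on_derivs_differentiable[OF f that]
      by (simp add: pd_add pd_cmult pd_const differentiable_mult)
    finally show ?thesis .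
  qed
  then show "hess f' y i j = c * hess f y i j" unfolding hess_def using y by simp
  have "pd i (pd j (pd k f')) y = pd i (\<lambda>z. c * pd j (pd k f) z) y"
    by (rule pd_cong_open[OF open_punctured]) (use y d2 in auto)
  also have "\<dots> = c * pd i (pd j (pd k f)) y"
    using smooth_on_derivs_differentiable[OF f] y by (simp add: pd_cmult)
  finally show "hess3 f' y i j k = c * hess3 f y i j k" unfolding hess3_def .
qed

lemma beta_change_jet_at:
  fixes L :: "real^'n::finite \<Rightarrow> real^'n \<Rightarrow> real"
    and c :: "real^'n \<Rightarrow> real" and b :: "real^'n \<Rightarrow> real^'n"
  defines "L' \<equiv> \<lambda>x y. c x * L x y + (\<Sum>i\<in>UNIV. b x $ i * y $ i)"
  assumes L: "finsler_metric U L" and L': "finsler_metric U L'" and x: "x \<in> U" and y: "y \<noteq> 0"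
    and c: "c x \<noteq> 0"
  shows "beta_change_jet y (L x y) (grad (L x) y) (hess (L x) y) (hess3 (L x) y) (ginv L x y)
    (L' x y) (grad (L' x) y) (hess (L' x) y) (hess3 (L' x) y) (ginv L' x y) (c x) (\<lambda>i. b x $ i)"
proof (intro beta_change_jet.intro beta_change_jet_axioms.intro
    finsler_jet_at[OF L x y] finsler_jet_at[OF L' x y] c)
  have "L' x = (\<lambda>z. c x * L x z + (\<Sum>i\<in>UNIV. b x $ i * z$i))" unfolding L'_def ..
  note derivs =
    derivs_beta_change[OF finsler_metric_smooth_fibre[OF L x] y, of "c x" "\<lambda>i. b x $ i", folded this]
  show "grad (L' x) y i = c x * grad (L x) y i + b x $ i" for i by (rule derivs(1))
  show "hess (L' x) y i j = c x * hess (L x) y i j" for i j by (rule derivs(2))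
  show "hess3 (L' x) y i j k = c x * hess3 (L x) y i j k" for i j k by (rule derivs(3))
qed (simp add: L'_def)

theorem theorem2:
  fixes U :: "(real^'n::finite) set"
    and L :: "real^'n \<Rightarrow> real^'n \<Rightarrow> real"
    and \<sigma> :: "real^'n \<Rightarrow> real"
    and b :: "real^'n \<Rightarrow> real^'n"
  assumes "CARD('n) > 4"
    and "open U"
    and "finsler_metric U L"
    and "smooth_on U \<sigma>"
    and "\<And>i. smooth_on U (\<lambda>x. b x $ i)"
    and "finsler_metric U (\<lambda>x y. exp (\<sigma> x) * L x y + (\<Sum>i\<in>UNIV. b x $ i * y $ i))"
  shows "S4_like U L \<longleftrightarrow> S4_like U (\<lambda>x y. exp (\<sigma> x) * L x y + (\<Sum>i\<in>UNIV. b x $ i * y $ i))"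
proof -
  let ?L' = "\<lambda>x y. exp (\<sigma> x) * L x y + (\<Sum>i\<in>UNIV. b x $ i * y $ i)"
  have n: "real CARD('n) > 3" using assms(1) by simp
  have "S4_like_of (ginv L x y) (cartan_form (grad (L x) y) (L x y) (hess (L x) y) (hess3 (L x) y))
          (angular_form (L x y) (hess (L x) y))
     \<longleftrightarrow> S4_like_of (ginv ?L' x y) (cartan_form (grad (?L' x) y) (?L' x y) (hess (?L' x) y) (hess3 (?L' x) y))
          (angular_form (?L' x y) (hess (?L' x) y))"
    if "x \<in> U" "y \<noteq> 0" for x y
    using beta_change_jet.S4_like_of_iff[OF beta_change_jet_at[OF assms(3) assms(6) that exp_not_eq_zero] n] .
  then show ?thesis
    unfolding S4_like_iff_S4_like_of[OF assms(3)] S4_like_iff_S4_like_of[OF assms(6)] by blast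
qed

end
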